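(* Let $(p,f)$ be an SCF-RT rationalizable within the class of all RUM-CFs, let $(x,y)\in D$, and for $t\geq0$ let $q(x,y)(t)=\frac{p(x,y)f(x,y)(t)}{p(y,x)f(y,x)(t)}$. If $q(x,y)(t)\geq1$ for almost all $t\geq0$, then every RUM-CF $(u,g,r)$ rationalizing $(p,f)$ satisfies $u(x)\geq u(y)$. If additionally $q(x,y)(t)>1$ on a set of $t$ of positive Lebesgue measure, then every such model satisfies $u(x)>u(y)$.
   Context: $X$ is a finite set of options; $C=\{(x,y): x,y\in X,\ x\neq y\}$; $D\subseteq C$ is a fixed non-empty set with $(x,y)\in D\Rightarrow (y,x)\in D$. An SCF $p$ assigns to each $(x,y)\in D$ a number $p(x,y)>0$ with $p(x,y)+p(y,x)=1$. An SCF-RT is a pair $(p,f)$ where $p$ is an SCF and $f$ assigns to each $(x,y)\in D$ a strictly positive density $f(x,y)$ on $\mathbb{R}^+$ with cdf $F(x,y)$. A RUM is a pair $(u,g)$ with $u:X\to\mathbb{R}$ and $g$ assigning to each $(x,y)\in C$ a density $g(x,y)$ on $\mathbb{R}$ (cdf $G(x,y)$) with $\int v\,g(x,y)(v)\,dv=u(x)-u(y)$, $g(x,y)(v)=g(y,x)(-v)$ for all $v$, and connected support. A RUM-CF is $(u,g,r)$ with $(u,g)$ a RUM and $r:\mathbb{R}^{++}\to\mathbb{R}^+$ continuous, strictly decreasing where $r(v)>0$, $\lim_{v\to0}r(v)=\infty$, $\lim_{v\to\infty}r(v)=0$; $r^{-1}(t)$ ($t>0$) is the inverse of $r$ restricted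 to $\{r>0\}$. It rationalizes $(p,f)$ if for all $(x,y)\in D$: $G(x,y)(0)=p(y,x)$ and $\frac{1-G(x,y)(r^{-1}(t))}{1-G(x,y)(0)}=F(x,y)(t)$ for all $t>0$. *)

theory Defs
  imports "HOL-Analysis.Analysis"
begin

definition pairs_C :: "'a set \<Rightarrow> ('a \<times> 'a) set" where
  "pairs_C X = {(x, y). x \<in> X \<and> y \<in> X \<and> x \<noteq> y}"

definition domain_ok :: "'a set \<Rightarrow> ('a \<times> 'a) set \<Rightarrow> bool" where
  "domain_ok X D \<longleftrightarrow> finite X \<and> D \<subseteq> pairs_C X \<and> D \<noteq> {} \<and>
     (\<forall>x y. (x, y) \<in> D \<longrightarrow> (y, x) \<in> D)"

definition SCF :: "('a \<times> 'a) set \<Rightarrow> ('a \<Rightarrow> 'a \<Rightarrow> real) \<Rightarrow> bool" where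
  "SCF D p \<longleftrightarrow> (\<forall>x y. (x, y) \<in> D \<longrightarrow> p x y > 0 \<and> p x y + p y x = 1)"

definition pos_density_Rplus :: "(real \<Rightarrow> real) \<Rightarrow> bool" where
  "pos_density_Rplus h \<longleftrightarrow> (\<forall>t\<ge>0. h t > 0) \<and> set_integrable lborel {0..} h \<and>
     (LINT t:{0..}|lborel. h t) = 1"

definition cdf_Rplus :: "(real \<Rightarrow> real) \<Rightarrow> real \<Rightarrow> real" where
  "cdf_Rplus h t = (LINT s:{0..t}|lborel. h s)"

definition SCF_RT :: "'a set \<Rightarrow> ('a \<times> 'a) set \<Rightarrow> ('a \<Rightarrow> 'a \<Rightarrow> real)
    \<Rightarrow> ('a \<Rightarrow> 'a \<Rightarrow> real \<Rightarrow> real) \<Rightarrow> bool" where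
  "SCF_RT X D p f \<longleftrightarrow> domain_ok X D \<and> SCF D p \<and>
     (\<forall>x y. (x, y) \<in> D \<longrightarrow> pos_density_Rplus (f x y))"

definition density_R :: "(real \<Rightarrow> real) \<Rightarrow> bool" where
  "density_R h \<longleftrightarrow> (\<forall>v. h v \<ge> 0) \<and> integrable lborel h \<and> (LINT v|lborel. h v) = 1"

definition cdf_R :: "(real \<Rightarrow> real) \<Rightarrow> real \<Rightarrow> real" where
  "cdf_R h v = (LINT w:{..v}|lborel. h w)"

definition dsupport :: "(real \<Rightarrow> real) \<Rightarrow> real set" where
  "dsupport h = closure {v. h v \<noteq> 0}"

definition RUM :: "'a set \<Rightarrow> ('a \<Rightarrow> real) \<Rightarrow> ('a \<Rightarrow> 'a \<Rightarrow> real \<Rightarrow> real) \<Rightarrow> bool" where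
  "RUM X u g \<longleftrightarrow> (\<forall>x y. (x, y) \<in> pairs_C X \<longrightarrow>
      density_R (g x y) \<and>
      integrable lborel (\<lambda>v. v * g x y v) \<and>
      (LINT v|lborel. v * g x y v) = u x - u y \<and>
      (\<forall>v. g x y v = g y x (- v)) \<and>
      connected (dsupport (g x y)))"

definition choice_fun :: "(real \<Rightarrow> real) \<Rightarrow> bool" where
  "choice_fun r \<longleftrightarrow> (\<forall>v>0. r v \<ge> 0) \<and> continuous_on {0<..} r \<and>
     (\<forall>v w. 0 < v \<and> v < w \<and> 0 < r v \<and> 0 < r w \<longrightarrow> r w < r v) \<and>
     filterlim r at_top (at_right 0) \<and> (r \<longlongrightarrow> 0) at_top"

definition r_inv :: "(real \<Rightarrow> real) \<Rightarrow> real \<Rightarrow> real" where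
  "r_inv r t = (THE v. 0 < v \<and> 0 < r v \<and> r v = t)"

definition RUM_CF :: "'a set \<Rightarrow> ('a \<Rightarrow> real) \<Rightarrow> ('a \<Rightarrow> 'a \<Rightarrow> real \<Rightarrow> real)
    \<Rightarrow> (real \<Rightarrow> real) \<Rightarrow> bool" where
  "RUM_CF X u g r \<longleftrightarrow> RUM X u g \<and> choice_fun r"

definition rationalizes :: "('a \<times> 'a) set \<Rightarrow> ('a \<Rightarrow> 'a \<Rightarrow> real) \<Rightarrow> ('a \<Rightarrow> 'a \<Rightarrow> real \<Rightarrow> real)
    \<Rightarrow> ('a \<Rightarrow> real) \<Rightarrow> ('a \<Rightarrow> 'a \<Rightarrow> real \<Rightarrow> real) \<Rightarrow> (real \<Rightarrow> real) \<Rightarrow> bool" where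
  "rationalizes D p f u g r \<longleftrightarrow> (\<forall>x y. (x, y) \<in> D \<longrightarrow>
      cdf_R (g x y) 0 = p y x \<and>
      (\<forall>t>0. (1 - cdf_R (g x y) (r_inv r t)) / (1 - cdf_R (g x y) 0) = cdf_Rplus (f x y) t))"

definition rationalizable_RUM_CF :: "'a set \<Rightarrow> ('a \<times> 'a) set \<Rightarrow> ('a \<Rightarrow> 'a \<Rightarrow> real)
    \<Rightarrow> ('a \<Rightarrow> 'a \<Rightarrow> real \<Rightarrow> real) \<Rightarrow> bool" where
  "rationalizable_RUM_CF X D p f \<longleftrightarrow> (\<exists>u g r. RUM_CF X u g r \<and> rationalizes D p f u g r)"

definition q_ratio :: "('a \<Rightarrow> 'a \<Rightarrow> real) \<Rightarrow> ('a \<Rightarrow> 'a \<Rightarrow> real \<Rightarrow> real) \<Rightarrow> 'a \<Rightarrow> 'a \<Rightarrow> real \<Rightarrow> real" where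
  "q_ratio p f x y t = (p x y * f x y t) / (p y x * f y x t)"

end

theory Submission
  imports Defs
begin

text \<open>
  Let \<open>T\<^sub>x\<^sub>y(s) = 1 - G(x,y)(s)\<close> be the right tail of the random utility difference.
  Rationalization says \<open>T\<^sub>x\<^sub>y(s) = p(x,y) F(x,y)(r(s))\<close> wherever \<open>r(s) > 0\<close>,
  and forces the tails to vanish where \<open>r\<close> does. If \<open>q(x,y) \<ge> 1\<close> almost everywhere,
  then \<open>t \<mapsto> p(x,y) F(x,y)(t) - p(y,x) F(y,x)(t)\<close> is nonnegative and nondecreasing,
  so \<open>T\<^sub>y\<^sub>x \<le> T\<^sub>x\<^sub>y\<close> on \<open>(0, \<infinity>)\<close>; if moreover \<open>q(x,y) > 1\<close> on a non-null set,
  the inequality is strict for all small \<open>s\<close>. Since \<open>g(y,x)\<close> is the reflection of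
  \<open>g(x,y)\<close>, the mean \<open>u(x) - u(y)\<close> of \<open>g(x,y)\<close> equals \<open>\<integral>\<^sub>0\<^sup>\<infinity> (T\<^sub>x\<^sub>y - T\<^sub>y\<^sub>x)\<close>.
\<close>

lemma set_integral_pos_AE:
  fixes f :: "'a \<Rightarrow> real"
  assumes int: "set_integrable M A f" and nonneg: "AE x\<in>A in M. 0 \<le> f x"
    and B: "B \<in> sets M" "B \<subseteq> A" "0 < emeasure M B" "\<And>x. x \<in> B \<Longrightarrow> 0 < f x"
  shows "0 < (LINT x:A|M. f x)"
proof -
  have int': "integrable M (\<lambda>x. indicator A x * f x)"
    and nonneg': "AE x in M. 0 \<le> indicator A x * f x"
    using int nonneg unfolding set_integrable_def by (auto simp: indicator_def)
  have "(LINT x:A|M. f x) \<noteq> 0"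
  proof
    assume "(LINT x:A|M. f x) = 0"
    then have "AE x in M. indicator A x * f x = 0"
      using integral_nonneg_eq_0_iff_AE[OF int' nonneg'] unfolding set_lebesgue_integral_def by simp
    then have "AE x in M. x \<notin> B"
      by eventually_elim (use B in \<open>force simp: indicator_def\<close>)
    then have "B \<in> null_sets M"
      using AE_iff_null_sets[OF B(1)] by blast
    with B(3) show False by (auto dest: null_setsD1)
  qed
  moreover have "0 \<le> (LINT x:A|M. f x)"
    using integral_nonneg_AE[OF nonneg'] unfolding set_lebesgue_integral_def by simp
  ultimately show ?thesis by simp
qed

lemma mono_set_integral_Icc:
  fixes h :: "real \<Rightarrow> real"
  assumes int: "set_integrable lborel {0..} h" and nonneg: "AE t in lborel. 0 \<le> t \<longrightarrow> 0 \<le> h t"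
  shows "mono (\<lambda>t. LINT s:{0..t}|lborel. h s)"
proof
  fix t t' :: real assume "t \<le> t'"
  have "set_integrable lborel {0..b} h" for b
    by (rule set_integrable_subset[OF int]) auto
  then show "(LINT s:{0..t}|lborel. h s) \<le> (LINT s:{0..t'}|lborel. h s)"
    unfolding set_lebesgue_integral_def set_integrable_def
    using nonneg \<open>t \<le> t'\<close>
    by (intro integral_mono_AE) (auto simp: indicator_def elim!: eventually_mono)
qed

lemma set_integral_Icc_nonneg:
  fixes h :: "real \<Rightarrow> real"
  assumes "set_integrable lborel {0..} h" "AE t in lborel. 0 \<le> t \<longrightarrow> 0 \<le> h t"
  shows "0 \<le> (LINT s:{0..t}|lborel. h s)"
  unfolding set_lebesgue_integral_def
  using assms(2) by (intro integral_nonneg_AE) (auto simp: indicator_def elim!: eventually_mono)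

lemma set_integral_Icc_pos_eventually:
  fixes h :: "real \<Rightarrow> real"
  assumes int: "set_integrable lborel {0..} h" and nonneg: "AE t in lborel. 0 \<le> t \<longrightarrow> 0 \<le> h t"
    and pos: "0 < emeasure lborel {t. 0 \<le> t \<and> 0 < h t}"
  obtains t where "0 < t" "0 < (LINT s:{0..t}|lborel. h s)"
proof -
  have [measurable]: "(\<lambda>t. indicator {0..} t * h t) \<in> borel_measurable lborel"
    using int unfolding set_integrable_def by simp
  have "{t. 0 \<le> t \<and> 0 < h t} = {t \<in> space lborel. 0 < indicator {0..} t * h t}"
    by (auto simp: indicator_def)
  also have "\<dots> \<in> sets lborel"
    by measurable
  finally have "0 < (LINT s:{0..}|lborel. h s)"
    using nonneg pos by (intro set_integral_pos_AE[OF int]) auto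
  moreover have "((\<lambda>b. LINT s:{0..b}|lborel. h s) \<longlongrightarrow> (LINT s:{0..}|lborel. h s)) at_top"
    using int by (intro tendsto_set_lebesgue_integral_at_top) auto
  ultimately have "eventually (\<lambda>b. 0 < (LINT s:{0..b}|lborel. h s)) at_top"
    by (rule order_tendstoD(1)[rotated])
  then obtain N where "\<And>b. N \<le> b \<Longrightarrow> 0 < (LINT s:{0..b}|lborel. h s)"
    unfolding eventually_at_top_linorder by blast
  then show thesis
    using that[of "max N 1"] by simp
qed

lemma nn_integral_pos_part_eq_tails:
  fixes \<phi> :: "real \<Rightarrow> real"
  assumes [measurable]: "\<phi> \<in> borel_measurable borel" and nonneg: "\<And>v. 0 \<le> \<phi> v"
  shows "(\<integral>\<^sup>+ v. ennreal (max v 0 * \<phi> v) \<partial>lborel)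
       = (\<integral>\<^sup>+ s\<in>{0<..}. (\<integral>\<^sup>+ v\<in>{s<..}. ennreal (\<phi> v) \<partial>lborel) \<partial>lborel)"
proof -
  have indicator_eq: "(\<lambda>(s, v). ennreal (\<phi> v) * indicator {0<..<v} s)
      = (\<lambda>z. ennreal (\<phi> (snd z)) * (if 0 < fst z \<and> fst z < snd z then 1 else 0))"
    by (auto simp: fun_eq_iff)
  have meas: "(\<lambda>(s, v). ennreal (\<phi> v) * indicator {0<..<v} s)
      \<in> borel_measurable (lborel \<Otimes>\<^sub>M lborel)"
    unfolding indicator_eq by measurable
  have "ennreal (max v 0 * \<phi> v) = (\<integral>\<^sup>+ s. ennreal (\<phi> v) * indicator {0<..<v} s \<partial>lborel)" for v
    using nonneg[of v] by (simp add: nn_integral_cmult_indicator ennreal_mult' max_def mult.commute)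
  then have "(\<integral>\<^sup>+ v. ennreal (max v 0 * \<phi> v) \<partial>lborel)
      = (\<integral>\<^sup>+ v. (\<integral>\<^sup>+ s. ennreal (\<phi> v) * indicator {0<..<v} s \<partial>lborel) \<partial>lborel)"
    by simp
  also have "\<dots> = (\<integral>\<^sup>+ s. (\<integral>\<^sup>+ v. ennreal (\<phi> v) * indicator {0<..<v} s \<partial>lborel) \<partial>lborel)"
    by (rule lborel_pair.Fubini'[OF meas])
  also have "\<dots> = (\<integral>\<^sup>+ s\<in>{0<..}. (\<integral>\<^sup>+ v\<in>{s<..}. ennreal (\<phi> v) \<partial>lborel) \<partial>lborel)"
    by (auto intro!: nn_integral_cong simp: indicator_def nn_integral_multc[symmetric])
  finally show ?thesis .
qed

lemma integrable_pos_part_mult: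
  fixes \<phi> :: "real \<Rightarrow> real"
  assumes "integrable lborel (\<lambda>v. v * \<phi> v)" "\<And>v. 0 \<le> \<phi> v"
  shows "integrable lborel (\<lambda>v. max v 0 * \<phi> v)"
proof -
  have "max v 0 * \<phi> v = max (v * \<phi> v) 0" for v
    using assms(2)[of v] by (auto simp: max_def mult_le_0_iff)
  then show ?thesis using assms(1) by simp
qed

lemma integrable_mult_reflect:
  fixes \<phi> :: "real \<Rightarrow> real"
  assumes "integrable lborel (\<lambda>v. v * \<phi> v)"
  shows "integrable lborel (\<lambda>v. v * \<phi> (- v))"
  using lborel_integrable_real_affine_iff[of "-1" "\<lambda>v. - (v * \<phi> v)" 0] assms by simp

lemma density_R_nonneg: "density_R \<phi> \<Longrightarrow> 0 \<le> \<phi> v"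
  unfolding density_R_def by blast

lemma density_R_measurable: "density_R \<phi> \<Longrightarrow> \<phi> \<in> borel_measurable borel"
  unfolding density_R_def by auto

lemma integrable_indicator_density_R:
  "density_R \<phi> \<Longrightarrow> A \<in> sets borel \<Longrightarrow> integrable lborel (\<lambda>v. indicator A v * \<phi> v)"
  unfolding density_R_def using integrable_mult_indicator[of A lborel \<phi>] by simp

lemma cdf_R_eq_integral: "cdf_R \<phi> s = (LINT v|lborel. indicator {..s} v * \<phi> v)"
  unfolding cdf_R_def set_lebesgue_integral_def by simp

lemma cdf_R_mono:
  assumes "density_R \<phi>"
  shows "mono (cdf_R \<phi>)"
proof
  fix s s' :: real assume "s \<le> s'"
  then show "cdf_R \<phi> s \<le> cdf_R \<phi> s'"
    unfolding cdf_R_eq_integral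
    by (intro integral_mono integrable_indicator_density_R[OF assms])
       (auto simp: indicator_def density_R_nonneg[OF assms])
qed

lemma cdf_R_le_one:
  assumes "density_R \<phi>"
  shows "cdf_R \<phi> s \<le> 1"
proof -
  have "cdf_R \<phi> s \<le> (LINT v|lborel. \<phi> v)"
    unfolding cdf_R_eq_integral using assms
    by (intro integral_mono integrable_indicator_density_R[OF assms])
       (auto simp: indicator_def density_R_def)
  with assms show ?thesis unfolding density_R_def by simp
qed

lemma nn_integral_greaterThan_density_R:
  assumes "density_R \<phi>"
  shows "(\<integral>\<^sup>+ v\<in>{s<..}. ennreal (\<phi> v) \<partial>lborel) = ennreal (1 - cdf_R \<phi> s)"
proof -
  have int: "integrable lborel (\<lambda>v. indicator A v * \<phi> v)" if "A \<in> sets borel" for A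
    using integrable_indicator_density_R[OF assms that] .
  have "(LINT v|lborel. \<phi> v) = (LINT v|lborel. indicator {..s} v * \<phi> v + indicator {s<..} v * \<phi> v)"
    by (rule Bochner_Integration.integral_cong) (auto simp: indicator_def)
  also have "\<dots> = cdf_R \<phi> s + (LINT v|lborel. indicator {s<..} v * \<phi> v)"
    unfolding cdf_R_eq_integral by (rule Bochner_Integration.integral_add[OF int int]) auto
  finally have "(LINT v|lborel. indicator {s<..} v * \<phi> v) = 1 - cdf_R \<phi> s"
    using assms unfolding density_R_def by simp
  moreover have "(\<integral>\<^sup>+ v\<in>{s<..}. ennreal (\<phi> v) \<partial>lborel)
      = ennreal (LINT v|lborel. indicator {s<..} v * \<phi> v)"
    using density_R_nonneg[OF assms]
    by (subst nn_integral_eq_integral[OF int, symmetric])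
       (auto intro!: nn_integral_cong simp: indicator_def)
  ultimately show ?thesis by simp
qed

lemma set_integral_tail_eq_pos_part:
  assumes "density_R \<phi>" "integrable lborel (\<lambda>v. v * \<phi> v)"
  shows "set_integrable lborel {0<..} (\<lambda>s. 1 - cdf_R \<phi> s)"
    and "(LINT s:{0<..}|lborel. 1 - cdf_R \<phi> s) = (LINT v|lborel. max v 0 * \<phi> v)"
proof -
  note nonneg = density_R_nonneg[OF assms(1)]
  have [measurable]: "\<phi> \<in> borel_measurable borel" "cdf_R \<phi> \<in> borel_measurable borel"
    using density_R_measurable[OF assms(1)] borel_measurable_mono[OF cdf_R_mono[OF assms(1)]]
    by auto
  have pos: "integrable lborel (\<lambda>v. max v 0 * \<phi> v)"
    using integrable_pos_part_mult[OF assms(2) nonneg] .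
  have "(\<integral>\<^sup>+ s. ennreal (indicator {0<..} s * (1 - cdf_R \<phi> s)) \<partial>lborel)
      = (\<integral>\<^sup>+ s\<in>{0<..}. (\<integral>\<^sup>+ v\<in>{s<..}. ennreal (\<phi> v) \<partial>lborel) \<partial>lborel)"
    unfolding nn_integral_greaterThan_density_R[OF assms(1)]
    by (auto intro!: nn_integral_cong simp: indicator_def)
  also have "\<dots> = (\<integral>\<^sup>+ v. ennreal (max v 0 * \<phi> v) \<partial>lborel)"
    by (rule nn_integral_pos_part_eq_tails[symmetric]) (auto simp: nonneg)
  also have "\<dots> = ennreal (LINT v|lborel. max v 0 * \<phi> v)"
    using nonneg by (intro nn_integral_eq_integral[OF pos]) auto
  finally have tails: "(\<integral>\<^sup>+ s. ennreal (indicator {0<..} s * (1 - cdf_R \<phi> s)) \<partial>lborel)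
      = ennreal (LINT v|lborel. max v 0 * \<phi> v)" .
  have tail_nonneg: "0 \<le> indicator {0<..} s * (1 - cdf_R \<phi> s)" for s
    using cdf_R_le_one[OF assms(1)] by auto
  show "set_integrable lborel {0<..} (\<lambda>s. 1 - cdf_R \<phi> s)"
    unfolding set_integrable_def using tail_nonneg
    by (auto intro: integrableI_nn_integral_finite[OF _ _ tails])
  show "(LINT s:{0<..}|lborel. 1 - cdf_R \<phi> s) = (LINT v|lborel. max v 0 * \<phi> v)"
    unfolding set_lebesgue_integral_def using tail_nonneg tails
    by (simp add: integral_eq_nn_integral integral_nonneg_AE nonneg)
qed

lemma mean_eq_diff_tail_integrals:
  assumes "density_R \<phi>" "density_R \<psi>" "\<And>v. \<psi> v = \<phi> (- v)"
    and "integrable lborel (\<lambda>v. v * \<phi> v)"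
  shows "(LINT v|lborel. v * \<phi> v)
       = (LINT s:{0<..}|lborel. 1 - cdf_R \<phi> s) - (LINT s:{0<..}|lborel. 1 - cdf_R \<psi> s)"
proof -
  note nonneg = density_R_nonneg[OF assms(1)]
  have reflected: "integrable lborel (\<lambda>v. v * \<psi> v)"
    using integrable_mult_reflect[OF assms(4)] assms(3) by simp
  have neg_part: "max (- v) 0 * \<phi> v = max (- (v * \<phi> v)) 0" for v
    using nonneg[of v] by (auto simp: max_def mult_le_0_iff zero_le_mult_iff)
  have "(LINT v|lborel. v * \<phi> v) = (LINT v|lborel. max v 0 * \<phi> v - max (- v) 0 * \<phi> v)"
    by (rule Bochner_Integration.integral_cong) (auto simp: max_def algebra_simps)
  also have "\<dots> = (LINT v|lborel. max v 0 * \<phi> v) - (LINT v|lborel. max (- v) 0 * \<phi> v)"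
    using integrable_pos_part_mult[OF assms(4) nonneg] assms(4) unfolding neg_part by simp
  also have "(LINT v|lborel. max (- v) 0 * \<phi> v) = (LINT v|lborel. max v 0 * \<psi> v)"
    using lborel_integral_real_affine[of "-1" "\<lambda>v. max (- v) 0 * \<phi> v" 0] assms(3) by simp
  finally show ?thesis
    using set_integral_tail_eq_pos_part(2)[OF assms(1,4)]
      set_integral_tail_eq_pos_part(2)[OF assms(2) reflected]
    by simp
qed

lemma mean_nonneg_if_tail_dominates:
  assumes "density_R \<phi>" "density_R \<psi>" "\<And>v. \<psi> v = \<phi> (- v)"
    and "integrable lborel (\<lambda>v. v * \<phi> v)"
    and "\<And>s. 0 < s \<Longrightarrow> 1 - cdf_R \<psi> s \<le> 1 - cdf_R \<phi> s"
  shows "0 \<le> (LINT v|lborel. v * \<phi> v)"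
proof -
  have "integrable lborel (\<lambda>v. v * \<psi> v)"
    using integrable_mult_reflect[OF assms(4)] assms(3) by simp
  then have "(LINT s:{0<..}|lborel. 1 - cdf_R \<psi> s) \<le> (LINT s:{0<..}|lborel. 1 - cdf_R \<phi> s)"
    using set_integral_tail_eq_pos_part(1) assms(1,2,4,5) by (intro set_integral_mono) simp_all
  then show ?thesis
    unfolding mean_eq_diff_tail_integrals[OF assms(1-4)] by simp
qed

lemma mean_pos_if_tail_dominates_strictly:
  assumes "density_R \<phi>" "density_R \<psi>" "\<And>v. \<psi> v = \<phi> (- v)"
    and "integrable lborel (\<lambda>v. v * \<phi> v)"
    and "\<And>s. 0 < s \<Longrightarrow> 1 - cdf_R \<psi> s \<le> 1 - cdf_R \<phi> s"
    and "0 < s\<^sub>0" "\<And>s. 0 < s \<Longrightarrow> s \<le> s\<^sub>0 \<Longrightarrow> 1 - cdf_R \<psi> s < 1 - cdf_R \<phi> s"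
  shows "0 < (LINT v|lborel. v * \<phi> v)"
proof -
  have "integrable lborel (\<lambda>v. v * \<psi> v)"
    using integrable_mult_reflect[OF assms(4)] assms(3) by simp
  note tails = set_integral_tail_eq_pos_part(1)[OF assms(1,4)]
    set_integral_tail_eq_pos_part(1)[OF assms(2) this]
  have "0 < (LINT s:{0<..}|lborel. (1 - cdf_R \<phi> s) - (1 - cdf_R \<psi> s))"
    by (rule set_integral_pos_AE[OF set_integral_diff(1)[OF tails], of "{0<..s\<^sub>0}"])
       (use assms(5-7) in auto)
  then show ?thesis
    unfolding mean_eq_diff_tail_integrals[OF assms(1-4)] set_integral_diff(2)[OF tails] by simp
qed

lemma choice_fun_nonneg: "choice_fun r \<Longrightarrow> 0 < v \<Longrightarrow> 0 \<le> r v"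
  unfolding choice_fun_def by blast

lemma choice_fun_strict_antimono:
  assumes "choice_fun r" "0 < v" "v < w" "0 < r w"
  shows "r w < r v"
proof -
  \<comment> \<open>Otherwise, since \<open>r\<close> blows up at 0, the intermediate value theorem gives
    \<open>c \<le> v\<close> with \<open>r c = r w > 0\<close>, against strict decrease where \<open>r\<close> is positive.\<close>
  have "0 < r v"
  proof (rule ccontr)
    assume "\<not> 0 < r v"
    then have rv: "r v = 0"
      using assms(1,2) unfolding choice_fun_def by (metis order.order_iff_strict)
    have "eventually (\<lambda>z. r w < r z) (at_right 0)"
      using assms(1) unfolding choice_fun_def by (simp add: filterlim_at_top_dense)
    then obtain b where b: "0 < b" "\<And>z. 0 < z \<Longrightarrow> z < b \<Longrightarrow> r w < r z"
      unfolding eventually_at_right_field by auto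
    define a where "a = min b v / 2"
    have a: "0 < a" "a < v" "r w < r a"
      using b assms(2) unfolding a_def by auto
    have "continuous_on {a..v} r"
      using assms(1) a unfolding choice_fun_def by (auto elim: continuous_on_subset)
    then obtain c where c: "a \<le> c" "c \<le> v" "r c = r w"
      using IVT2'[of r v "r w" a] rv a assms(4) by auto
    have "0 < c" "c < w" using a c assms(3) by auto
    with assms(1,4) c have "r w < r c"
      unfolding choice_fun_def by metis
    with c show False by simp
  qed
  with assms show ?thesis unfolding choice_fun_def by blast
qed

lemma choice_fun_antimono:
  assumes "choice_fun r" "0 < v" "v \<le> w" "0 < r w"
  shows "r w \<le> r v"
  using choice_fun_strict_antimono[OF assms(1,2) _ assms(4)] assms(3) by force

lemma choice_fun_vanishes_beyond:
  assumes "choice_fun r" "0 < v" "v \<le> w" "r v = 0"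
  shows "r w = 0"
  using choice_fun_antimono[OF assms(1-3)] choice_fun_nonneg[OF assms(1), of w] assms by force

lemma r_inv_eq:
  assumes "choice_fun r" "0 < v" "0 < r v"
  shows "r_inv r (r v) = v"
  unfolding r_inv_def
proof (rule the_equality)
  fix w assume w: "0 < w \<and> 0 < r w \<and> r w = r v"
  show "w = v"
    using choice_fun_strict_antimono[OF assms(1), of w v]
      choice_fun_strict_antimono[OF assms(1), of v w] w assms(2,3)
    by (cases w v rule: linorder_cases) auto
qed (use assms in auto)

lemma choice_fun_surj:
  assumes "choice_fun r" "0 < t"
  obtains v where "0 < v" "r v = t"
proof -
  have "eventually (\<lambda>v. t < r v) (at_right 0)"
    using assms(1) unfolding choice_fun_def by (simp add: filterlim_at_top_dense)
  then obtain b where b: "0 < b" "\<And>v. 0 < v \<Longrightarrow> v < b \<Longrightarrow> t < r v"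
    unfolding eventually_at_right_field by auto
  have "eventually (\<lambda>v. r v < t) at_top"
    using assms unfolding choice_fun_def by (blast intro: order_tendstoD(2))
  then obtain N where N: "\<And>v. N \<le> v \<Longrightarrow> r v < t"
    unfolding eventually_at_top_linorder by auto
  define a where "a = b / 2"
  define c where "c = max N a"
  have "0 < a" "a \<le> c" "r c < t" "t < r a"
    using b N unfolding a_def c_def by auto
  moreover have "continuous_on {a..c} r"
    using assms(1) \<open>0 < a\<close> unfolding choice_fun_def by (auto elim: continuous_on_subset)
  ultimately obtain v where "a \<le> v" "r v = t"
    using IVT2'[of r c t a] by auto
  moreover from \<open>0 < a\<close> \<open>a \<le> v\<close> have "0 < v" by linarith
  ultimately show thesis using that by blast
qed

lemma r_inv:
  assumes "choice_fun r" "0 < t"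
  shows "0 < r_inv r t" "r (r_inv r t) = t"
  using choice_fun_surj[OF assms] r_inv_eq[OF assms(1)] assms(2) by metis+

lemma cdf_Rplus_inverse_Suc_tendsto_0:
  assumes "pos_density_Rplus h"
  shows "(\<lambda>n. cdf_Rplus h (inverse (Suc n))) \<longlonglongrightarrow> 0"
proof -
  define I where "I n = {0..inverse (real (Suc n))}" for n
  have "(\<Inter>n. I n) = {0}"
  proof safe
    fix x assume "x \<in> (\<Inter>n. I n)"
    then have "0 \<le> x" "\<And>n. x \<le> inverse (real (Suc n))"
      unfolding I_def by auto
    then show "x = 0"
      using LIMSEQ_le_const[OF LIMSEQ_inverse_real_of_nat, of x] by fastforce
  qed (auto simp: I_def)
  moreover have "(\<lambda>n. LINT s:I n|lborel. h s) \<longlonglongrightarrow> (LINT s:(\<Inter>n. I n)|lborel. h s)"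
  proof (rule set_integral_cont_down)
    show "decseq I"
      unfolding I_def decseq_def by (auto intro: order_trans[OF _ le_imp_inverse_le])
    show "set_integrable lborel (I 0) h"
      using assms unfolding pos_density_Rplus_def I_def by (auto intro: set_integrable_subset)
  qed (auto simp: I_def)
  moreover have "(LINT s:{0}|lborel. h s) = 0"
    unfolding set_lebesgue_integral_def
    by (rule integral_eq_zero_AE) (use AE_lborel_singleton[of 0] in \<open>auto elim!: eventually_mono\<close>)
  ultimately show ?thesis
    unfolding cdf_Rplus_def I_def by simp
qed

lemma SCF_RT_pairD:
  assumes "SCF_RT X D p f" "(a, b) \<in> D"
  shows "(b, a) \<in> D" "(a, b) \<in> pairs_C X" "0 < p a b" "p a b + p b a = 1"
    and "pos_density_Rplus (f a b)" "(b, a) \<in> pairs_C X"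
  using assms unfolding SCF_RT_def domain_ok_def SCF_def by auto

lemma RUM_pairD:
  assumes "RUM X u g" "(a, b) \<in> pairs_C X"
  shows "density_R (g a b)" "integrable lborel (\<lambda>v. v * g a b v)"
    and "(LINT v|lborel. v * g a b v) = u a - u b" "g b a v = g a b (- v)"
  using assms unfolding RUM_def by (blast, blast, blast, metis minus_minus)

lemma rationalizes_tail_eq:
  assumes "SCF_RT X D p f" "choice_fun r" "rationalizes D p f u g r" "(a, b) \<in> D"
    and "0 < s" "0 < r s"
  shows "1 - cdf_R (g a b) s = p a b * cdf_Rplus (f a b) (r s)"
proof -
  have "cdf_R (g a b) 0 = p b a \<and>
      (\<forall>t>0. (1 - cdf_R (g a b) (r_inv r t)) / (1 - cdf_R (g a b) 0) = cdf_Rplus (f a b) t)"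
    using assms(3,4) unfolding rationalizes_def by blast
  then have "cdf_R (g a b) 0 = p b a"
    and "(1 - cdf_R (g a b) (r_inv r (r s))) / (1 - cdf_R (g a b) 0) = cdf_Rplus (f a b) (r s)"
    using assms(6) by blast+
  moreover have "1 - p b a = p a b" "0 < p a b"
    using SCF_RT_pairD[OF assms(1,4)] by auto
  ultimately show ?thesis
    using r_inv_eq[OF assms(2,5,6)] by (simp add: field_simps)
qed

lemma rationalizes_tail_eq_0:
  assumes "SCF_RT X D p f" "RUM_CF X u g r" "rationalizes D p f u g r" "(a, b) \<in> D"
    and "0 < s" "r s = 0"
  shows "1 - cdf_R (g a b) s = 0"
proof -
  have r: "choice_fun r" and dens: "density_R (g a b)"
    using assms(2) RUM_pairD(1) SCF_RT_pairD(2)[OF assms(1,4)] unfolding RUM_CF_def by auto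
  have bound: "1 - cdf_R (g a b) s \<le> p a b * cdf_Rplus (f a b) (inverse (Suc n))" for n
  proof -
    define s' where "s' = r_inv r (inverse (Suc n))"
    have s': "0 < s'" "r s' = inverse (Suc n)"
      using r_inv[OF r, of "inverse (Suc n)"] unfolding s'_def by auto
    have "s' \<le> s"
      using choice_fun_vanishes_beyond[OF r assms(5) _ assms(6), of s'] s' by force
    then have "1 - cdf_R (g a b) s \<le> 1 - cdf_R (g a b) s'"
      using cdf_R_mono[OF dens] by (simp add: monoD)
    also have "\<dots> = p a b * cdf_Rplus (f a b) (inverse (Suc n))"
      using rationalizes_tail_eq[OF assms(1) r assms(3,4) s'(1)] s' by simp
    finally show ?thesis .
  qed
  have lim: "(\<lambda>n. p a b * cdf_Rplus (f a b) (inverse (Suc n))) \<longlonglongrightarrow> p a b * 0"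
    using cdf_Rplus_inverse_Suc_tendsto_0[OF SCF_RT_pairD(5)[OF assms(1,4)]]
    by (intro tendsto_mult_left)
  have "1 - cdf_R (g a b) s \<le> p a b * 0"
    using bound by (intro tendsto_lowerbound[OF lim] always_eventually) auto
  with cdf_R_le_one[OF dens, of s] show ?thesis by simp
qed

lemma rationalizes_tail_le:
  assumes "SCF_RT X D p f" "RUM_CF X u g r" "rationalizes D p f u g r" "(x, y) \<in> D"
    and "\<And>t. 0 < t \<Longrightarrow> p y x * cdf_Rplus (f y x) t \<le> p x y * cdf_Rplus (f x y) t"
    and "0 < s"
  shows "1 - cdf_R (g y x) s \<le> 1 - cdf_R (g x y) s"
proof -
  have r: "choice_fun r" and dens: "density_R (g x y)"
    using assms(2) RUM_pairD(1) SCF_RT_pairD(2)[OF assms(1,4)] unfolding RUM_CF_def by auto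
  note yx = SCF_RT_pairD(1)[OF assms(1,4)]
  show ?thesis
  proof (cases "r s = 0")
    case True
    then show ?thesis
      using rationalizes_tail_eq_0[OF assms(1-3) yx assms(6)] cdf_R_le_one[OF dens, of s] by simp
  next
    case False
    then have "0 < r s"
      using choice_fun_nonneg[OF r assms(6)] by simp
    then show ?thesis
      using rationalizes_tail_eq[OF assms(1) r assms(3) _ assms(6)] assms(4,5) yx by simp
  qed
qed

lemma rationalizes_tail_less:
  assumes "SCF_RT X D p f" "RUM_CF X u g r" "rationalizes D p f u g r" "(x, y) \<in> D"
    and "0 < t\<^sub>0" "\<And>t. t\<^sub>0 \<le> t \<Longrightarrow> p y x * cdf_Rplus (f y x) t < p x y * cdf_Rplus (f x y) t"
    and "0 < s" "s \<le> r_inv r t\<^sub>0"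
  shows "1 - cdf_R (g y x) s < 1 - cdf_R (g x y) s"
proof -
  have r: "choice_fun r"
    using assms(2) unfolding RUM_CF_def by simp
  have "t\<^sub>0 \<le> r s"
    using choice_fun_antimono[OF r assms(7,8)] r_inv[OF r assms(5)] assms(5) by simp
  with assms(5) have "0 < r s" by simp
  with \<open>t\<^sub>0 \<le> r s\<close> show ?thesis
    using rationalizes_tail_eq[OF assms(1) r assms(3) _ assms(7)] assms(4,6)
      SCF_RT_pairD(1)[OF assms(1,4)]
    by simp
qed

lemma RUM_CF_utility_le:
  assumes "SCF_RT X D p f" "RUM_CF X u g r" "rationalizes D p f u g r" "(x, y) \<in> D"
    and "\<And>t. 0 < t \<Longrightarrow> p y x * cdf_Rplus (f y x) t \<le> p x y * cdf_Rplus (f x y) t"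
  shows "u y \<le> u x"
proof -
  have rum: "RUM X u g"
    using assms(2) unfolding RUM_CF_def by simp
  note xy = SCF_RT_pairD(2)[OF assms(1,4)] and yx = SCF_RT_pairD(6)[OF assms(1,4)]
  have "0 \<le> (LINT v|lborel. v * g x y v)"
    by (rule mean_nonneg_if_tail_dominates[of "g x y" "g y x"])
       (use RUM_pairD[OF rum xy] RUM_pairD(1)[OF rum yx] rationalizes_tail_le[OF assms] in auto)
  then show ?thesis
    using RUM_pairD(3)[OF rum xy] by simp
qed

lemma RUM_CF_utility_less:
  assumes "SCF_RT X D p f" "RUM_CF X u g r" "rationalizes D p f u g r" "(x, y) \<in> D"
    and "\<And>t. 0 < t \<Longrightarrow> p y x * cdf_Rplus (f y x) t \<le> p x y * cdf_Rplus (f x y) t"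
    and "0 < t\<^sub>0" "\<And>t. t\<^sub>0 \<le> t \<Longrightarrow> p y x * cdf_Rplus (f y x) t < p x y * cdf_Rplus (f x y) t"
  shows "u y < u x"
proof -
  have rum: "RUM X u g" and r: "choice_fun r"
    using assms(2) unfolding RUM_CF_def by simp_all
  note xy = SCF_RT_pairD(2)[OF assms(1,4)] and yx = SCF_RT_pairD(6)[OF assms(1,4)]
  have "0 < (LINT v|lborel. v * g x y v)"
    by (rule mean_pos_if_tail_dominates_strictly[of "g x y" "g y x" "r_inv r t\<^sub>0"])
       (use RUM_pairD[OF rum xy] RUM_pairD(1)[OF rum yx] rationalizes_tail_le[OF assms(1-5)]
          rationalizes_tail_less[OF assms(1-4,6,7)] r_inv(1)[OF r assms(6)] in auto)
  then show ?thesis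
    using RUM_pairD(3)[OF rum xy] by simp
qed

lemma SCF_RT_weighted_density_diff:
  assumes "SCF_RT X D p f" "(x, y) \<in> D"
  shows "set_integrable lborel {0..} (\<lambda>s. p x y * f x y s - p y x * f y x s)"
    and "(LINT s:{0..t}|lborel. p x y * f x y s - p y x * f y x s)
       = p x y * cdf_Rplus (f x y) t - p y x * cdf_Rplus (f y x) t"
proof -
  have "set_integrable lborel {0..} (f a b)" if "(a, b) \<in> D" for a b
    using SCF_RT_pairD(5)[OF assms(1) that] unfolding pos_density_Rplus_def by simp
  note int = this[OF assms(2)] this[OF SCF_RT_pairD(1)[OF assms]]
  show "set_integrable lborel {0..} (\<lambda>s. p x y * f x y s - p y x * f y x s)"
    using int by (intro set_integral_diff(1)) auto
  have "set_integrable lborel {0..t} (f a b)" if "set_integrable lborel {0..} (f a b)" for a b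
    using that by (rule set_integrable_subset) auto
  then show "(LINT s:{0..t}|lborel. p x y * f x y s - p y x * f y x s)
       = p x y * cdf_Rplus (f x y) t - p y x * cdf_Rplus (f y x) t"
    unfolding cdf_Rplus_def using int by (subst set_integral_diff(2)) auto
qed

lemma q_ratio_ge_1_iff:
  assumes "SCF_RT X D p f" "(x, y) \<in> D" "0 \<le> t"
  shows "1 \<le> q_ratio p f x y t \<longleftrightarrow> 0 \<le> p x y * f x y t - p y x * f y x t"
    and "1 < q_ratio p f x y t \<longleftrightarrow> 0 < p x y * f x y t - p y x * f y x t"
proof -
  note yx = SCF_RT_pairD(1)[OF assms(1,2)]
  have "0 < p y x * f y x t"
    using SCF_RT_pairD(3,5)[OF assms(1) yx] assms(3) unfolding pos_density_Rplus_def by simp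
  then show "1 \<le> q_ratio p f x y t \<longleftrightarrow> 0 \<le> p x y * f x y t - p y x * f y x t"
    and "1 < q_ratio p f x y t \<longleftrightarrow> 0 < p x y * f x y t - p y x * f y x t"
    unfolding q_ratio_def by (simp_all add: le_divide_eq less_divide_eq)
qed

lemma AE_q_ratio_ge_1_iff:
  assumes "SCF_RT X D p f" "(x, y) \<in> D"
  shows "(AE t in lborel. t \<ge> 0 \<longrightarrow> q_ratio p f x y t \<ge> 1)
     \<longleftrightarrow> (AE t in lborel. 0 \<le> t \<longrightarrow> 0 \<le> p x y * f x y t - p y x * f y x t)"
  using q_ratio_ge_1_iff(1)[OF assms] by (intro AE_cong) auto

lemma weighted_cdf_le_if_q_ratio_ge_1:
  assumes "SCF_RT X D p f" "(x, y) \<in> D" "AE t in lborel. t \<ge> 0 \<longrightarrow> q_ratio p f x y t \<ge> 1"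
  shows "p y x * cdf_Rplus (f y x) t \<le> p x y * cdf_Rplus (f x y) t"
  using set_integral_Icc_nonneg[OF SCF_RT_weighted_density_diff(1)[OF assms(1,2)], of t]
    assms(3) SCF_RT_weighted_density_diff(2)[OF assms(1,2)]
  unfolding AE_q_ratio_ge_1_iff[OF assms(1,2)] by simp

lemma weighted_cdf_less_if_q_ratio_gt_1:
  assumes "SCF_RT X D p f" "(x, y) \<in> D" "AE t in lborel. t \<ge> 0 \<longrightarrow> q_ratio p f x y t \<ge> 1"
    and "0 < emeasure lborel {t. t \<ge> 0 \<and> q_ratio p f x y t > 1}"
  obtains t\<^sub>0 where "0 < t\<^sub>0"
    "\<And>t. t\<^sub>0 \<le> t \<Longrightarrow> p y x * cdf_Rplus (f y x) t < p x y * cdf_Rplus (f x y) t"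
proof -
  define h where "h s = p x y * f x y s - p y x * f y x s" for s
  note int = SCF_RT_weighted_density_diff(1)[OF assms(1,2), folded h_def]
  have nonneg: "AE t in lborel. 0 \<le> t \<longrightarrow> 0 \<le> h t"
    using assms(3) unfolding AE_q_ratio_ge_1_iff[OF assms(1,2)] h_def .
  have "{t. t \<ge> 0 \<and> q_ratio p f x y t > 1} = {t. 0 \<le> t \<and> 0 < h t}"
    using q_ratio_ge_1_iff(2)[OF assms(1,2)] unfolding h_def by blast
  then obtain t\<^sub>0 where t\<^sub>0: "0 < t\<^sub>0" "0 < (LINT s:{0..t\<^sub>0}|lborel. h s)"
    using set_integral_Icc_pos_eventually[OF int nonneg] assms(4) by auto
  have "0 < (LINT s:{0..t}|lborel. h s)" if "t\<^sub>0 \<le> t" for t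
    using monoD[OF mono_set_integral_Icc[OF int nonneg] that] t\<^sub>0(2) by linarith
  then show thesis
    using that[OF t\<^sub>0(1)] SCF_RT_weighted_density_diff(2)[OF assms(1,2)] unfolding h_def by simp
qed

theorem corollary1:
  fixes X :: "'a set" and D :: "('a \<times> 'a) set"
    and p :: "'a \<Rightarrow> 'a \<Rightarrow> real" and f :: "'a \<Rightarrow> 'a \<Rightarrow> real \<Rightarrow> real"
    and x y :: 'a
  assumes "SCF_RT X D p f"
    and "rationalizable_RUM_CF X D p f"
    and "(x, y) \<in> D"
  shows "((AE t in lborel. t \<ge> 0 \<longrightarrow> q_ratio p f x y t \<ge> 1) \<longrightarrow>
           (\<forall>u g r. RUM_CF X u g r \<and> rationalizes D p f u g r \<longrightarrow> u x \<ge> u y))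
       \<and> ((AE t in lborel. t \<ge> 0 \<longrightarrow> q_ratio p f x y t \<ge> 1) \<and>
           emeasure lborel {t. t \<ge> 0 \<and> q_ratio p f x y t > 1} > 0 \<longrightarrow>
           (\<forall>u g r. RUM_CF X u g r \<and> rationalizes D p f u g r \<longrightarrow> u x > u y))"
proof (intro conjI impI allI)
  fix u g r
  assume q: "AE t in lborel. t \<ge> 0 \<longrightarrow> q_ratio p f x y t \<ge> 1"
    and model: "RUM_CF X u g r \<and> rationalizes D p f u g r"
  show "u y \<le> u x"
    using RUM_CF_utility_le[OF assms(1) _ _ assms(3)]
      weighted_cdf_le_if_q_ratio_ge_1[OF assms(1,3) q] model
    by blast
next
  fix u g r
  assume q: "(AE t in lborel. t \<ge> 0 \<longrightarrow> q_ratio p f x y t \<ge> 1) \<and>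
      emeasure lborel {t. t \<ge> 0 \<and> q_ratio p f x y t > 1} > 0"
    and model: "RUM_CF X u g r \<and> rationalizes D p f u g r"
  obtain t\<^sub>0 where "0 < t\<^sub>0"
    "\<And>t. t\<^sub>0 \<le> t \<Longrightarrow> p y x * cdf_Rplus (f y x) t < p x y * cdf_Rplus (f x y) t"
    using weighted_cdf_less_if_q_ratio_gt_1[OF assms(1,3)] q by blast
  then show "u y < u x"
    using RUM_CF_utility_less[OF assms(1) _ _ assms(3)]
      weighted_cdf_le_if_q_ratio_ge_1[OF assms(1,3)] q model
    by blast
qed

end
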